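(* The adjunctions $\overline{\,\cdot\,}\dashv\pi\dashv\underline{\,\cdot\,}$ restrict to adjoint equivalences $\mathbf{Lsc}_n\simeq\mathbf{Ob}_n\simeq\mathbf{Usc}_n$: the lower envelope $\overline{\,\cdot\,}:\mathbf{Ob}_n\to\mathbf{Lsc}_n$ and $\pi|_{\mathbf{Lsc}_n}$ form an adjoint equivalence, and dually $\pi|_{\mathbf{Usc}_n}$ and the upper envelope $\underline{\,\cdot\,}:\mathbf{Ob}_n\to\mathbf{Usc}_n$ form an adjoint equivalence.
   Context: Fix a field $\mathbb{k}$. $\mathbf{Pers}_n$ is the category of functors $\mathbf{R}^n\to\mathbf{Vect}_{\mathbb{k}}$ ($\mathbf{R}^n$ with componentwise order), with structure maps $V_{s,t}$; $s+\varepsilon$ adds $\varepsilon$ to each coordinate. A module $V$ is lower semicontinuous if the canonical map $\operatorname{colim}_{\varepsilon>0}V_{s-\varepsilon}\to V_s$ is an isomorphism for all $s$, and upper semicontinuous if $V_s\to\lim_{\varepsilon>0}V_{s+\varepsilon}$ is an isomorphism for all $s$; $\mathbf{Lsc}_n,\mathbf{Usc}_n$ are the corresponding full subcategories of $\mathbf{Pers}_n$. The observable category $\mathbf{Ob}_n$ has the same objects as $\mathbf{Pers}_n$; a morphism $\varphi:V\to W$ is a family of linear maps $\varphi_{s,s+\varepsilon}:V_s\to W_{s+\varepsilon}$ ($\varepsilon>0$) with $\varphi_{s,s+\varepsilon}=W_{s+\varepsilon',s+\varepsilon}\circ\varphi_{s+\varepsilon'',s+\varepsilon'}\circ V_{s,s+\varepsilon''}$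 for $0\le\varepsilon''<\varepsilon'\le\varepsilon$; composition $(\psi\circ\varphi)_{s,s+\varepsilon}=\psi_{s+\varepsilon',s+\varepsilon}\circ\varphi_{s,s+\varepsilon'}$ ($0<\varepsilon'<\varepsilon$). $\pi:\mathbf{Pers}_n\to\mathbf{Ob}_n$ is the identity on objects and sends $\varphi$ to $(W_{s,s+\varepsilon}\circ\varphi_s)$. The lower envelope $\overline V_s=\operatorname{colim}_{\varepsilon>0}V_{s-\varepsilon}$ and upper envelope $\underline V_s=\lim_{\varepsilon>0}V_{s+\varepsilon}$ are functors $\mathbf{Ob}_n\to\mathbf{Pers}_n$ (on observable morphisms induced by the $\varphi_{s-\varepsilon,s-\delta}$, resp. $\varphi_{s+\delta,s+\varepsilon}$); they satisfy $\overline{\,\cdot\,}\dashv\pi\dashv\underline{\,\cdot\,}$. *)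

theory Defs
  imports "HOL-Analysis.Analysis" "HOL-Algebra.Module"
begin

text \<open>Vector spaces over the field K are HOL-Algebra modules (records) over K.
  Persistence modules indexed by R^n (type real^'n, componentwise order).\<close>

definition lin :: "('k, 'x) ring_scheme \<Rightarrow> ('k, 'c) module \<Rightarrow> ('k, 'd) module \<Rightarrow> ('c \<Rightarrow> 'd) \<Rightarrow> bool" where
  "lin K M N f \<longleftrightarrow> f \<in> carrier M \<rightarrow> carrier N \<and>
     (\<forall>x\<in>carrier M. \<forall>y\<in>carrier M. f (x \<oplus>\<^bsub>M\<^esub> y) = f x \<oplus>\<^bsub>N\<^esub> f y) \<and>
     (\<forall>a\<in>carrier K. \<forall>x\<in>carrier M. f (a \<odot>\<^bsub>M\<^esub> x) = a \<odot>\<^bsub>N\<^esub> f x)"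

record ('n, 'k, 'c) pmod =
  sp :: "real^'n::finite \<Rightarrow> ('k, 'c) module"
  mp :: "real^'n \<Rightarrow> real^'n \<Rightarrow> 'c \<Rightarrow> 'c"

definition up :: "real^'n::finite \<Rightarrow> real \<Rightarrow> real^'n" where
  "up s e = s + (\<chi> i. e)"

definition dn :: "real^'n::finite \<Rightarrow> real \<Rightarrow> real^'n" where
  "dn s e = s - (\<chi> i. e)"

definition pers :: "'k ring \<Rightarrow> ('n::finite, 'k, 'c) pmod \<Rightarrow> bool" where
  "pers K V \<longleftrightarrow> (\<forall>s. module K (sp V s)) \<and>
     (\<forall>s t. s \<le> t \<longrightarrow> lin K (sp V s) (sp V t) (mp V s t)) \<and>
     (\<forall>s x. x \<in> carrier (sp V s) \<longrightarrow> mp V s s x = x) \<and>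
     (\<forall>s t u x. s \<le> t \<longrightarrow> t \<le> u \<longrightarrow> x \<in> carrier (sp V s) \<longrightarrow>
        mp V s u x = mp V t u (mp V s t x))"

definition pers_hom :: "'k ring \<Rightarrow> ('n::finite, 'k, 'c) pmod \<Rightarrow> ('n, 'k, 'd) pmod \<Rightarrow> (real^'n \<Rightarrow> 'c \<Rightarrow> 'd) \<Rightarrow> bool" where
  "pers_hom K V W f \<longleftrightarrow> (\<forall>s. lin K (sp V s) (sp W s) (f s)) \<and>
     (\<forall>s t x. s \<le> t \<longrightarrow> x \<in> carrier (sp V s) \<longrightarrow> f t (mp V s t x) = mp W s t (f s x))"

definition pers_iso :: "'k ring \<Rightarrow> ('n::finite, 'k, 'c) pmod \<Rightarrow> ('n, 'k, 'd) pmod \<Rightarrow> (real^'n \<Rightarrow> 'c \<Rightarrow> 'd) \<Rightarrow> bool" where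
  "pers_iso K V W f \<longleftrightarrow> pers_hom K V W f \<and>
     (\<exists>g. pers_hom K W V g \<and> (\<forall>s x. x \<in> carrier (sp V s) \<longrightarrow> g s (f s x) = x) \<and>
                               (\<forall>s y. y \<in> carrier (sp W s) \<longrightarrow> f s (g s y) = y))"

text \<open>Morphisms of the observable category Ob_n: phi s e : V_s -> W_{s+e} for e > 0.\<close>
definition obs_hom :: "'k ring \<Rightarrow> ('n::finite, 'k, 'c) pmod \<Rightarrow> ('n, 'k, 'd) pmod \<Rightarrow> (real^'n \<Rightarrow> real \<Rightarrow> 'c \<Rightarrow> 'd) \<Rightarrow> bool" where
  "obs_hom K V W \<phi> \<longleftrightarrow> (\<forall>s e. 0 < e \<longrightarrow> lin K (sp V s) (sp W (up s e)) (\<phi> s e)) \<and>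
     (\<forall>s e e' e'' x. 0 < e \<longrightarrow> 0 \<le> e'' \<longrightarrow> e'' < e' \<longrightarrow> e' \<le> e \<longrightarrow> x \<in> carrier (sp V s) \<longrightarrow>
        \<phi> s e x = mp W (up s e') (up s e) (\<phi> (up s e'') (e' - e'') (mp V s (up s e'') x)))"

definition obs_eq :: "('n::finite, 'k, 'c) pmod \<Rightarrow> (real^'n \<Rightarrow> real \<Rightarrow> 'c \<Rightarrow> 'd) \<Rightarrow> (real^'n \<Rightarrow> real \<Rightarrow> 'c \<Rightarrow> 'd) \<Rightarrow> bool" where
  "obs_eq V \<phi> \<psi> \<longleftrightarrow> (\<forall>s e x. 0 < e \<longrightarrow> x \<in> carrier (sp V s) \<longrightarrow> \<phi> s e x = \<psi> s e x)"

definition obs_comp :: "(real^'n::finite \<Rightarrow> real \<Rightarrow> 'd \<Rightarrow> 'e) \<Rightarrow> (real^'n \<Rightarrow> real \<Rightarrow> 'c \<Rightarrow> 'd) \<Rightarrow> real^'n \<Rightarrow> real \<Rightarrow> 'c \<Rightarrow> 'e" where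
  "obs_comp \<psi> \<phi> = (\<lambda>s e x. \<psi> (up s (e/2)) (e/2) (\<phi> s (e/2) x))"

definition obs_id :: "('n::finite, 'k, 'c) pmod \<Rightarrow> real^'n \<Rightarrow> real \<Rightarrow> 'c \<Rightarrow> 'c" where
  "obs_id V = (\<lambda>s e x. mp V s (up s e) x)"

definition obs_iso :: "'k ring \<Rightarrow> ('n::finite, 'k, 'c) pmod \<Rightarrow> ('n, 'k, 'd) pmod \<Rightarrow> (real^'n \<Rightarrow> real \<Rightarrow> 'c \<Rightarrow> 'd) \<Rightarrow> bool" where
  "obs_iso K V W \<phi> \<longleftrightarrow> obs_hom K V W \<phi> \<and>
     (\<exists>\<psi>. obs_hom K W V \<psi> \<and> obs_eq V (obs_comp \<psi> \<phi>) (obs_id V) \<and> obs_eq W (obs_comp \<phi> \<psi>) (obs_id W))"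

section \<open>Lower envelope: colim_{e>0} V_{s-e}, as equivalence classes of pairs (e, x), x in V_{s-e}\<close>

definition lcls :: "('n::finite, 'k, 'c) pmod \<Rightarrow> real^'n \<Rightarrow> real \<Rightarrow> 'c \<Rightarrow> (real \<times> 'c) set" where
  "lcls V s e x = {(d, y). 0 < d \<and> y \<in> carrier (sp V (dn s d)) \<and>
      (\<exists>h. 0 < h \<and> h \<le> e \<and> h \<le> d \<and> mp V (dn s e) (dn s h) x = mp V (dn s d) (dn s h) y)}"

definition lcar :: "('n::finite, 'k, 'c) pmod \<Rightarrow> real^'n \<Rightarrow> (real \<times> 'c) set set" where
  "lcar V s = {lcls V s e x | e x. 0 < e \<and> x \<in> carrier (sp V (dn s e))}"

definition lzero :: "('n::finite, 'k, 'c) pmod \<Rightarrow> real^'n \<Rightarrow> (real \<times> 'c) set" where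
  "lzero V s = lcls V s 1 (\<zero>\<^bsub>sp V (dn s 1)\<^esub>)"

definition ladd :: "('n::finite, 'k, 'c) pmod \<Rightarrow> real^'n \<Rightarrow> (real \<times> 'c) set \<Rightarrow> (real \<times> 'c) set \<Rightarrow> (real \<times> 'c) set" where
  "ladd V s a b = (SOME c. \<exists>e x d y. 0 < e \<and> 0 < d \<and> x \<in> carrier (sp V (dn s e)) \<and> y \<in> carrier (sp V (dn s d)) \<and>
      a = lcls V s e x \<and> b = lcls V s d y \<and>
      c = lcls V s (min e d) (mp V (dn s e) (dn s (min e d)) x \<oplus>\<^bsub>sp V (dn s (min e d))\<^esub> mp V (dn s d) (dn s (min e d)) y))"

definition lsmult :: "('n::finite, 'k, 'c) pmod \<Rightarrow> real^'n \<Rightarrow> 'k \<Rightarrow> (real \<times> 'c) set \<Rightarrow> (real \<times> 'c) set" where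
  "lsmult V s k a = (SOME c. \<exists>e x. 0 < e \<and> x \<in> carrier (sp V (dn s e)) \<and>
      a = lcls V s e x \<and> c = lcls V s e (k \<odot>\<^bsub>sp V (dn s e)\<^esub> x))"

definition lenv :: "('n::finite, 'k, 'c) pmod \<Rightarrow> ('n, 'k, (real \<times> 'c) set) pmod" where
  "lenv V = \<lparr> sp = (\<lambda>s. \<lparr> carrier = lcar V s, mult = undefined, one = undefined,
                           zero = lzero V s, add = ladd V s, smult = lsmult V s \<rparr>),
             mp = (\<lambda>s t a. SOME b. \<exists>e x. 0 < e \<and> x \<in> carrier (sp V (dn s e)) \<and>
                      a = lcls V s e x \<and> b = lcls V t e (mp V (dn s e) (dn t e) x)) \<rparr>"

text \<open>Counit of lower envelope -| pi (the canonical map colim V_{s-e} -> V_s) and unit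
  W -> pi(lower envelope of W) in Ob: w in W_s goes to the class of (e, w) in colim W_{(s+e)-d}.\<close>
definition lcounit :: "('n::finite, 'k, 'c) pmod \<Rightarrow> real^'n \<Rightarrow> (real \<times> 'c) set \<Rightarrow> 'c" where
  "lcounit V s a = (SOME y. \<exists>e x. 0 < e \<and> x \<in> carrier (sp V (dn s e)) \<and>
      a = lcls V s e x \<and> y = mp V (dn s e) s x)"

definition lunit :: "('n::finite, 'k, 'c) pmod \<Rightarrow> real^'n \<Rightarrow> real \<Rightarrow> 'c \<Rightarrow> (real \<times> 'c) set" where
  "lunit V s e w = lcls V (up s e) e w"

definition lsc :: "'k ring \<Rightarrow> ('n::finite, 'k, 'c) pmod \<Rightarrow> bool" where
  "lsc K V \<longleftrightarrow> pers K V \<and> (\<forall>s. bij_betw (lcounit V s) (lcar V s) (carrier (sp V s)))"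

section \<open>Upper envelope: lim_{e>0} V_{s+e}, as compatible families (extensional: undefined for e \<le> 0)\<close>

definition ucar :: "('n::finite, 'k, 'c) pmod \<Rightarrow> real^'n \<Rightarrow> (real \<Rightarrow> 'c) set" where
  "ucar V s = {f. (\<forall>e. 0 < e \<longrightarrow> f e \<in> carrier (sp V (up s e))) \<and>
      (\<forall>d e. 0 < d \<longrightarrow> d \<le> e \<longrightarrow> mp V (up s d) (up s e) (f d) = f e) \<and>
      (\<forall>e. \<not> 0 < e \<longrightarrow> f e = undefined)}"

definition uenv :: "('n::finite, 'k, 'c) pmod \<Rightarrow> ('n, 'k, real \<Rightarrow> 'c) pmod" where
  "uenv V = \<lparr> sp = (\<lambda>s. \<lparr> carrier = ucar V s, mult = undefined, one = undefined,
        zero = (\<lambda>e. if 0 < e then \<zero>\<^bsub>sp V (up s e)\<^esub> else undefined),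
        add = (\<lambda>f g e. if 0 < e then f e \<oplus>\<^bsub>sp V (up s e)\<^esub> g e else undefined),
        smult = (\<lambda>k f e. if 0 < e then k \<odot>\<^bsub>sp V (up s e)\<^esub> f e else undefined) \<rparr>),
     mp = (\<lambda>s t f e. if 0 < e then mp V (up s e) (up t e) (f e) else undefined) \<rparr>"

text \<open>Unit V -> upper envelope of pi V (the canonical map V_s -> lim V_{s+e}) and
  counit pi(upper envelope of W) -> W in Ob (projection onto the e-th component).\<close>
definition uunit :: "('n::finite, 'k, 'c) pmod \<Rightarrow> real^'n \<Rightarrow> 'c \<Rightarrow> real \<Rightarrow> 'c" where
  "uunit V s x = (\<lambda>e. if 0 < e then mp V s (up s e) x else undefined)"

definition ucounit :: "real^'n::finite \<Rightarrow> real \<Rightarrow> (real \<Rightarrow> 'c) \<Rightarrow> 'c" where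
  "ucounit s e f = f e"

definition usc :: "'k ring \<Rightarrow> ('n::finite, 'k, 'c) pmod \<Rightarrow> bool" where
  "usc K V \<longleftrightarrow> pers K V \<and> (\<forall>s. bij_betw (uunit V s) (carrier (sp V s)) (ucar V s))"

end

theory Submission
  imports Defs
begin

(*
  The lower envelope at s is the colimit of the V_{s-e}, e > 0, realised by the classes
  lcls V s e x; every class has representatives at all sufficiently small e. Hence pi of the
  counit lenv V -> V inverts the unit in the observable category: both composites are structure
  maps V_{s,s+e}. A class of classes, represented at indices e and d, only depends on its image
  at the diagonal index e + d, which makes the counit of lenv V bijective, i.e. lenv V is lower
  semicontinuous. For lower semicontinuous V the counit is a pointwise bijective natural
  transformation, hence a natural isomorphism.

  Dually, the upper envelope at s consists of the compatible families (f e)_{e>0}, f e in V_{s+e};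
  pi of the unit V -> uenv V inverts the projection counit, and a family of families G e d only
  depends on e + d, so uenv V is upper semicontinuous.
*)

lemma up_up [simp]: "up (up s a) b = up s (a + b)"
  by (simp add: up_def vec_eq_iff)

lemma dn_eq_up [simp]: "dn s e = up s (- e)"
  by (simp add: up_def dn_def vec_eq_iff)

lemma up_0 [simp]: "up s 0 = s"
  by (simp add: up_def vec_eq_iff)

lemma up_le_up_iff [simp]: "up s a \<le> up s b \<longleftrightarrow> a \<le> b"
  by (simp add: up_def less_eq_vec_def)

lemma le_up_iff [simp]: "s \<le> up s b \<longleftrightarrow> 0 \<le> b"
  using up_le_up_iff[of s 0 b] by simp

lemma up_le_iff [simp]: "up s b \<le> s \<longleftrightarrow> b \<le> 0"
  using up_le_up_iff[of s b 0] by simp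

lemma up_mono [simp]: "s \<le> t \<Longrightarrow> a \<le> b \<Longrightarrow> up s a \<le> up t b"
  by (simp add: up_def less_eq_vec_def add_mono)

lemma up_le_of_nonpos [simp]: "s \<le> t \<Longrightarrow> a \<le> 0 \<Longrightarrow> up s a \<le> t"
  using up_mono[of s t a 0] by simp

lemma le_up_of_nonneg [simp]: "s \<le> t \<Longrightarrow> 0 \<le> b \<Longrightarrow> s \<le> up t b"
  using up_mono[of s t 0 b] by simp

section \<open>Linear maps and modules\<close>

lemma linD:
  assumes "lin K M N f"
  shows "x \<in> carrier M \<Longrightarrow> f x \<in> carrier N"
    and "x \<in> carrier M \<Longrightarrow> y \<in> carrier M \<Longrightarrow> f (x \<oplus>\<^bsub>M\<^esub> y) = f x \<oplus>\<^bsub>N\<^esub> f y"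
    and "a \<in> carrier K \<Longrightarrow> x \<in> carrier M \<Longrightarrow> f (a \<odot>\<^bsub>M\<^esub> x) = a \<odot>\<^bsub>N\<^esub> f x"
  using assms unfolding lin_def by blast+

lemma lin_comp: "lin K L M f \<Longrightarrow> lin K M N g \<Longrightarrow> lin K L N (\<lambda>x. g (f x))"
  unfolding lin_def Pi_def by simp

lemma lin_zero:
  assumes "lin K M N f" "module K M" "module K N"
  shows "f \<zero>\<^bsub>M\<^esub> = \<zero>\<^bsub>N\<^esub>"
proof -
  interpret M: module K M by fact
  interpret N: module K N by fact
  have "f \<zero>\<^bsub>M\<^esub> = f (\<zero>\<^bsub>K\<^esub> \<odot>\<^bsub>M\<^esub> \<zero>\<^bsub>M\<^esub>)" by simp
  also have "\<dots> = \<zero>\<^bsub>K\<^esub> \<odot>\<^bsub>N\<^esub> f \<zero>\<^bsub>M\<^esub>"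
    by (rule linD(3)[OF assms(1)]) simp_all
  also have "\<dots> = \<zero>\<^bsub>N\<^esub>" using linD(1)[OF assms(1)] by simp
  finally show ?thesis .
qed

lemma lin_inv_into:
  assumes M: "module K M" and f: "lin K M N f" and bij: "bij_betw f (carrier M) (carrier N)"
  shows "lin K N M (inv_into (carrier M) f)"
proof -
  interpret M: module K M by (rule M)
  let ?g = "inv_into (carrier M) f"
  have g: "?g y \<in> carrier M" and fg: "f (?g y) = y" if "y \<in> carrier N" for y
    using that bij by (auto simp: bij_betw_def intro: inv_into_into f_inv_into_f)
  have gf: "?g (f x) = x" if "x \<in> carrier M" for x
    using that bij by (simp add: bij_betw_def)
  show ?thesis
    unfolding lin_def
  proof (intro conjI ballI Pi_I)
    fix y z assume y: "y \<in> carrier N" and z: "z \<in> carrier N"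
    show "?g (y \<oplus>\<^bsub>N\<^esub> z) = ?g y \<oplus>\<^bsub>M\<^esub> ?g z"
      using gf[of "?g y \<oplus>\<^bsub>M\<^esub> ?g z"] linD(2)[OF f g[OF y] g[OF z]] g y z by (simp add: fg)
  next
    fix a y assume a: "a \<in> carrier K" and y: "y \<in> carrier N"
    show "?g (a \<odot>\<^bsub>N\<^esub> y) = a \<odot>\<^bsub>M\<^esub> ?g y"
      using gf[of "a \<odot>\<^bsub>M\<^esub> ?g y"] linD(3)[OF f a g[OF y]] g a y by (simp add: fg)
  qed (rule g)
qed

lemma module_from_covering_lins:
  fixes K :: "('k, 'r) ring_scheme" and N :: "('k, 'n) module"
  assumes K: "cring K" and zero: "\<zero>\<^bsub>N\<^esub> \<in> carrier N"
    and cover: "\<And>a b c. a \<in> carrier N \<Longrightarrow> b \<in> carrier N \<Longrightarrow> c \<in> carrier N \<Longrightarrow>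
      \<exists>(M :: ('k, 'm) module) f x y z. module K M \<and> lin K M N f \<and> f \<zero>\<^bsub>M\<^esub> = \<zero>\<^bsub>N\<^esub> \<and>
        x \<in> carrier M \<and> y \<in> carrier M \<and> z \<in> carrier M \<and> a = f x \<and> b = f y \<and> c = f z"
  shows "module K N"
proof (rule moduleI[OF K abelian_groupI])
  fix a b c assume "a \<in> carrier N" "b \<in> carrier N" "c \<in> carrier N"
  then obtain M :: "('k, 'm) module" and f x y z where "module K M" and f: "lin K M N f"
    and xyz: "x \<in> carrier M" "y \<in> carrier M" "z \<in> carrier M" and "a = f x" "b = f y" "c = f z"
    using cover by meson
  interpret module K M by fact
  show "a \<oplus>\<^bsub>N\<^esub> b \<oplus>\<^bsub>N\<^esub> c = a \<oplus>\<^bsub>N\<^esub> (b \<oplus>\<^bsub>N\<^esub> c)"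
    using linD[OF f] xyz \<open>a = f x\<close> \<open>b = f y\<close> \<open>c = f z\<close> by (metis add.m_closed a_assoc)
next
  fix a b assume "a \<in> carrier N" "b \<in> carrier N"
  then obtain M :: "('k, 'm) module" and f x y z where "module K M" and f: "lin K M N f"
    and xy: "x \<in> carrier M" "y \<in> carrier M" and "a = f x" "b = f y"
    using cover by meson
  interpret module K M by fact
  show "a \<oplus>\<^bsub>N\<^esub> b \<in> carrier N" "a \<oplus>\<^bsub>N\<^esub> b = b \<oplus>\<^bsub>N\<^esub> a"
    using linD[OF f] xy \<open>a = f x\<close> \<open>b = f y\<close> by (metis add.m_closed a_comm)+
  fix k assume k: "k \<in> carrier K"
  show "k \<odot>\<^bsub>N\<^esub> (a \<oplus>\<^bsub>N\<^esub> b) = k \<odot>\<^bsub>N\<^esub> a \<oplus>\<^bsub>N\<^esub> k \<odot>\<^bsub>N\<^esub> b"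
    using linD[OF f] k xy \<open>a = f x\<close> \<open>b = f y\<close> by (metis smult_closed smult_r_distr add.m_closed)
next
  fix a assume "a \<in> carrier N"
  then obtain M :: "('k, 'm) module" and f x y z where "module K M" and f: "lin K M N f"
    and f0: "f \<zero>\<^bsub>M\<^esub> = \<zero>\<^bsub>N\<^esub>" and x: "x \<in> carrier M" and "a = f x"
    using cover by meson
  interpret module K M by fact
  show "\<zero>\<^bsub>N\<^esub> \<oplus>\<^bsub>N\<^esub> a = a"
    using linD[OF f] x \<open>a = f x\<close> f0 by (metis zero_closed l_zero)
  show "\<exists>b\<in>carrier N. b \<oplus>\<^bsub>N\<^esub> a = \<zero>\<^bsub>N\<^esub>"
    using linD[OF f] x \<open>a = f x\<close> f0 by (metis a_inv_closed l_neg)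
  show "\<one>\<^bsub>K\<^esub> \<odot>\<^bsub>N\<^esub> a = a"
    using linD[OF f] x \<open>a = f x\<close> by (metis smult_one R.one_closed)
  fix k l assume kl: "k \<in> carrier K" "l \<in> carrier K"
  show "k \<odot>\<^bsub>N\<^esub> a \<in> carrier N"
    using linD[OF f] kl x \<open>a = f x\<close> by (metis smult_closed)
  show "(k \<oplus>\<^bsub>K\<^esub> l) \<odot>\<^bsub>N\<^esub> a = k \<odot>\<^bsub>N\<^esub> a \<oplus>\<^bsub>N\<^esub> l \<odot>\<^bsub>N\<^esub> a"
    using linD[OF f] kl x \<open>a = f x\<close> by (metis smult_closed smult_l_distr R.add.m_closed)
  show "(k \<otimes>\<^bsub>K\<^esub> l) \<odot>\<^bsub>N\<^esub> a = k \<odot>\<^bsub>N\<^esub> (l \<odot>\<^bsub>N\<^esub> a)"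
    using linD[OF f] kl x \<open>a = f x\<close> by (metis smult_closed smult_assoc1 R.m_closed)
qed (rule zero)

lemma abelian_group_from_separating_lins:
  fixes K :: "('k, 'r) ring_scheme" and N :: "('k, 'n) module" and M :: "'i \<Rightarrow> ('k, 'm) module"
  assumes K: "cring K"
    and M: "\<And>i. i \<in> I \<Longrightarrow> module K (M i)"
    and f: "\<And>i. i \<in> I \<Longrightarrow> lin K N (M i) (f i)"
    and f0: "\<And>i. i \<in> I \<Longrightarrow> f i \<zero>\<^bsub>N\<^esub> = \<zero>\<^bsub>M i\<^esub>"
    and separating: "\<And>a b. a \<in> carrier N \<Longrightarrow> b \<in> carrier N \<Longrightarrow> (\<And>i. i \<in> I \<Longrightarrow> f i a = f i b) \<Longrightarrow> a = b"
    and zero: "\<zero>\<^bsub>N\<^esub> \<in> carrier N"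
    and add: "\<And>a b. a \<in> carrier N \<Longrightarrow> b \<in> carrier N \<Longrightarrow> a \<oplus>\<^bsub>N\<^esub> b \<in> carrier N"
    and smult: "\<And>k a. k \<in> carrier K \<Longrightarrow> a \<in> carrier N \<Longrightarrow> k \<odot>\<^bsub>N\<^esub> a \<in> carrier N"
  shows "abelian_group N"
proof -
  interpret K: cring K by (rule K)
  show ?thesis
  proof (rule abelian_groupI)
    fix a b c assume abc: "a \<in> carrier N" "b \<in> carrier N" "c \<in> carrier N"
    show "a \<oplus>\<^bsub>N\<^esub> b \<oplus>\<^bsub>N\<^esub> c = a \<oplus>\<^bsub>N\<^esub> (b \<oplus>\<^bsub>N\<^esub> c)"
    proof (rule separating)
      fix i assume i: "i \<in> I"
      interpret module K "M i" by (rule M[OF i])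
      show "f i (a \<oplus>\<^bsub>N\<^esub> b \<oplus>\<^bsub>N\<^esub> c) = f i (a \<oplus>\<^bsub>N\<^esub> (b \<oplus>\<^bsub>N\<^esub> c))"
        using linD[OF f[OF i]] abc add by (simp add: a_assoc)
    qed (use abc add in auto)
  next
    fix a b assume ab: "a \<in> carrier N" "b \<in> carrier N"
    show "a \<oplus>\<^bsub>N\<^esub> b = b \<oplus>\<^bsub>N\<^esub> a"
    proof (rule separating)
      fix i assume i: "i \<in> I"
      interpret module K "M i" by (rule M[OF i])
      show "f i (a \<oplus>\<^bsub>N\<^esub> b) = f i (b \<oplus>\<^bsub>N\<^esub> a)"
        using linD[OF f[OF i]] ab by (simp add: a_comm)
    qed (use ab add in auto)
  next
    fix a assume a: "a \<in> carrier N"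
    show "\<zero>\<^bsub>N\<^esub> \<oplus>\<^bsub>N\<^esub> a = a"
    proof (rule separating)
      fix i assume i: "i \<in> I"
      interpret module K "M i" by (rule M[OF i])
      show "f i (\<zero>\<^bsub>N\<^esub> \<oplus>\<^bsub>N\<^esub> a) = f i a"
        using linD[OF f[OF i]] a zero f0[OF i] by simp
    qed (use a zero add in auto)
    have minus_one: "\<ominus>\<^bsub>K\<^esub> \<one>\<^bsub>K\<^esub> \<in> carrier K" by simp
    show "\<exists>b\<in>carrier N. b \<oplus>\<^bsub>N\<^esub> a = \<zero>\<^bsub>N\<^esub>"
    proof (rule bexI)
      show "(\<ominus>\<^bsub>K\<^esub> \<one>\<^bsub>K\<^esub>) \<odot>\<^bsub>N\<^esub> a \<oplus>\<^bsub>N\<^esub> a = \<zero>\<^bsub>N\<^esub>"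
      proof (rule separating)
        fix i assume i: "i \<in> I"
        interpret module K "M i" by (rule M[OF i])
        show "f i ((\<ominus>\<^bsub>K\<^esub> \<one>\<^bsub>K\<^esub>) \<odot>\<^bsub>N\<^esub> a \<oplus>\<^bsub>N\<^esub> a) = f i \<zero>\<^bsub>N\<^esub>"
          using linD[OF f[OF i]] a smult minus_one f0[OF i] by (simp add: smult_l_minus l_neg)
      qed (use a smult minus_one add zero in auto)
    qed (use a smult minus_one in blast)
  qed (fact zero add)+
qed

lemma module_from_separating_lins:
  fixes K :: "('k, 'r) ring_scheme" and N :: "('k, 'n) module" and M :: "'i \<Rightarrow> ('k, 'm) module"
  assumes K: "cring K"
    and M: "\<And>i. i \<in> I \<Longrightarrow> module K (M i)"
    and f: "\<And>i. i \<in> I \<Longrightarrow> lin K N (M i) (f i)"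
    and f0: "\<And>i. i \<in> I \<Longrightarrow> f i \<zero>\<^bsub>N\<^esub> = \<zero>\<^bsub>M i\<^esub>"
    and separating: "\<And>a b. a \<in> carrier N \<Longrightarrow> b \<in> carrier N \<Longrightarrow> (\<And>i. i \<in> I \<Longrightarrow> f i a = f i b) \<Longrightarrow> a = b"
    and zero: "\<zero>\<^bsub>N\<^esub> \<in> carrier N"
    and add: "\<And>a b. a \<in> carrier N \<Longrightarrow> b \<in> carrier N \<Longrightarrow> a \<oplus>\<^bsub>N\<^esub> b \<in> carrier N"
    and smult: "\<And>k a. k \<in> carrier K \<Longrightarrow> a \<in> carrier N \<Longrightarrow> k \<odot>\<^bsub>N\<^esub> a \<in> carrier N"
  shows "module K N"
proof -
  interpret K: cring K by (rule K)
  have "abelian_group N"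
    by (rule abelian_group_from_separating_lins) (fact assms)+
  then show ?thesis
  proof (rule moduleI[OF K])
    fix k a b assume k: "k \<in> carrier K" and ab: "a \<in> carrier N" "b \<in> carrier N"
    show "k \<odot>\<^bsub>N\<^esub> (a \<oplus>\<^bsub>N\<^esub> b) = k \<odot>\<^bsub>N\<^esub> a \<oplus>\<^bsub>N\<^esub> k \<odot>\<^bsub>N\<^esub> b"
    proof (rule separating)
      fix i assume i: "i \<in> I"
      interpret module K "M i" by (rule M[OF i])
      show "f i (k \<odot>\<^bsub>N\<^esub> (a \<oplus>\<^bsub>N\<^esub> b)) = f i (k \<odot>\<^bsub>N\<^esub> a \<oplus>\<^bsub>N\<^esub> k \<odot>\<^bsub>N\<^esub> b)"
        using linD[OF f[OF i]] ab k add smult by (simp add: smult_r_distr)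
    qed (use ab k add smult in auto)
  next
    fix a assume a: "a \<in> carrier N"
    show "\<one>\<^bsub>K\<^esub> \<odot>\<^bsub>N\<^esub> a = a"
    proof (rule separating)
      fix i assume i: "i \<in> I"
      interpret module K "M i" by (rule M[OF i])
      show "f i (\<one>\<^bsub>K\<^esub> \<odot>\<^bsub>N\<^esub> a) = f i a"
        using linD[OF f[OF i]] a by simp
    qed (use a smult in auto)
    fix k l assume kl: "k \<in> carrier K" "l \<in> carrier K"
    show "(k \<oplus>\<^bsub>K\<^esub> l) \<odot>\<^bsub>N\<^esub> a = k \<odot>\<^bsub>N\<^esub> a \<oplus>\<^bsub>N\<^esub> l \<odot>\<^bsub>N\<^esub> a"
    proof (rule separating)
      fix i assume i: "i \<in> I"
      interpret module K "M i" by (rule M[OF i])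
      show "f i ((k \<oplus>\<^bsub>K\<^esub> l) \<odot>\<^bsub>N\<^esub> a) = f i (k \<odot>\<^bsub>N\<^esub> a \<oplus>\<^bsub>N\<^esub> l \<odot>\<^bsub>N\<^esub> a)"
        using linD[OF f[OF i]] a kl smult by (simp add: smult_l_distr)
    qed (use a kl smult add in auto)
    show "(k \<otimes>\<^bsub>K\<^esub> l) \<odot>\<^bsub>N\<^esub> a = k \<odot>\<^bsub>N\<^esub> (l \<odot>\<^bsub>N\<^esub> a)"
    proof (rule separating)
      fix i assume i: "i \<in> I"
      interpret module K "M i" by (rule M[OF i])
      show "f i ((k \<otimes>\<^bsub>K\<^esub> l) \<odot>\<^bsub>N\<^esub> a) = f i (k \<odot>\<^bsub>N\<^esub> (l \<odot>\<^bsub>N\<^esub> a))"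
        using linD[OF f[OF i]] a kl smult by (simp add: smult_assoc1)
    qed (use a kl smult in auto)
  qed (fact smult)
qed

definition obs_of :: "('n::finite, 'k, 'd) pmod \<Rightarrow> (real^'n \<Rightarrow> 'c \<Rightarrow> 'd) \<Rightarrow> real^'n \<Rightarrow> real \<Rightarrow> 'c \<Rightarrow> 'd" where
  "obs_of W f = (\<lambda>s e x. mp W s (up s e) (f s x))"

locale persistence_module =
  fixes K :: "'k ring" and V :: "('n::finite, 'k, 'c) pmod"
  assumes cring: "cring K" and pers: "pers K V"
begin

lemma module_sp [simp]: "module K (sp V s)"
  using pers unfolding pers_def by blast

lemma lin_mp: "s \<le> t \<Longrightarrow> lin K (sp V s) (sp V t) (mp V s t)"
  using pers unfolding pers_def by blast

lemma mp_closed [simp]: "s \<le> t \<Longrightarrow> x \<in> carrier (sp V s) \<Longrightarrow> mp V s t x \<in> carrier (sp V t)"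
  by (rule linD(1)[OF lin_mp])

lemma mp_add:
  "s \<le> t \<Longrightarrow> x \<in> carrier (sp V s) \<Longrightarrow> y \<in> carrier (sp V s) \<Longrightarrow>
    mp V s t (x \<oplus>\<^bsub>sp V s\<^esub> y) = mp V s t x \<oplus>\<^bsub>sp V t\<^esub> mp V s t y"
  by (rule linD(2)[OF lin_mp])

lemma mp_smult:
  "s \<le> t \<Longrightarrow> a \<in> carrier K \<Longrightarrow> x \<in> carrier (sp V s) \<Longrightarrow>
    mp V s t (a \<odot>\<^bsub>sp V s\<^esub> x) = a \<odot>\<^bsub>sp V t\<^esub> mp V s t x"
  by (rule linD(3)[OF lin_mp])

lemma mp_zero [simp]: "s \<le> t \<Longrightarrow> mp V s t \<zero>\<^bsub>sp V s\<^esub> = \<zero>\<^bsub>sp V t\<^esub>"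
  by (rule lin_zero[OF lin_mp]) simp_all

lemma mp_id [simp]: "x \<in> carrier (sp V s) \<Longrightarrow> mp V s s x = x"
  using pers unfolding pers_def by blast

lemma mp_comp [simp]:
  "s \<le> t \<Longrightarrow> t \<le> u \<Longrightarrow> x \<in> carrier (sp V s) \<Longrightarrow> mp V t u (mp V s t x) = mp V s u x"
  using pers unfolding pers_def by metis

lemma add_closed [simp]:
  "x \<in> carrier (sp V s) \<Longrightarrow> y \<in> carrier (sp V s) \<Longrightarrow> x \<oplus>\<^bsub>sp V s\<^esub> y \<in> carrier (sp V s)"
  using module.axioms(2)[OF module_sp] by (rule abelian_groupE(1))

lemma smult_closed [simp]:
  "a \<in> carrier K \<Longrightarrow> x \<in> carrier (sp V s) \<Longrightarrow> a \<odot>\<^bsub>sp V s\<^esub> x \<in> carrier (sp V s)"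
  by (rule module.smult_closed[OF module_sp])

lemma zero_closed [simp]: "\<zero>\<^bsub>sp V s\<^esub> \<in> carrier (sp V s)"
  using module.axioms(2)[OF module_sp] by (rule abelian_groupE(2))

lemma pers_iso_of_pointwise_bij:
  assumes f: "pers_hom K V W f" and bij: "\<And>s. bij_betw (f s) (carrier (sp V s)) (carrier (sp W s))"
  shows "pers_iso K V W f"
proof -
  define g where "g s = inv_into (carrier (sp V s)) (f s)" for s
  have lin_f: "lin K (sp V s) (sp W s) (f s)" for s
    using f unfolding pers_hom_def by blast
  have gf: "g s (f s x) = x" if "x \<in> carrier (sp V s)" for s x
    using that bij[of s] by (simp add: g_def bij_betw_def)
  have fg: "f s (g s y) = y" and g_closed: "g s y \<in> carrier (sp V s)"
    if "y \<in> carrier (sp W s)" for s y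
    using that bij[of s] by (auto simp: g_def bij_betw_def intro: f_inv_into_f inv_into_into)
  have "pers_hom K W V g"
    unfolding pers_hom_def
  proof (intro conjI allI impI)
    show "lin K (sp W s) (sp V s) (g s)" for s
      unfolding g_def by (rule lin_inv_into[OF module_sp lin_f bij])
  next
    fix s t y assume st: "s \<le> t" and y: "y \<in> carrier (sp W s)"
    have "mp W s t y = f t (mp V s t (g s y))"
      using f st g_closed[OF y] by (simp add: pers_hom_def fg[OF y])
    then show "g t (mp W s t y) = mp V s t (g s y)"
      using gf st g_closed[OF y] by simp
  qed
  then show ?thesis
    unfolding pers_iso_def using f gf fg by blast
qed

lemma obs_hom_obs_of:
  assumes f: "pers_hom K U V f"
  shows "obs_hom K U V (obs_of V f)"
  unfolding obs_hom_def obs_of_def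
proof (intro conjI allI impI)
  fix s and e :: real assume "0 < e"
  have "lin K (sp U s) (sp V s) (f s)"
    using f unfolding pers_hom_def by blast
  then show "lin K (sp U s) (sp V (up s e)) (\<lambda>x. mp V s (up s e) (f s x))"
    by (rule lin_comp) (rule lin_mp, simp add: less_imp_le \<open>0 < e\<close>)
next
  fix s and e e' e'' :: real and x
  assume e: "0 < e" "0 \<le> e''" "e'' < e'" "e' \<le> e" and x: "x \<in> carrier (sp U s)"
  have fx: "f s x \<in> carrier (sp V s)"
    using f x unfolding pers_hom_def by (blast dest: linD(1))
  have "f (up s e'') (mp U s (up s e'') x) = mp V s (up s e'') (f s x)"
    using f x e unfolding pers_hom_def by simp
  then show "mp V s (up s e) (f s x) =
      mp V (up s e') (up s e) (mp V (up s e'') (up (up s e'') (e' - e'')) (f (up s e'') (mp U s (up s e'') x)))"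
    using e fx by simp
qed

subsection \<open>The lower envelope\<close>

definition meet_at :: "real^'n \<Rightarrow> real \<Rightarrow> 'c \<Rightarrow> real \<Rightarrow> 'c \<Rightarrow> real \<Rightarrow> bool" where
  "meet_at s e x d y h \<longleftrightarrow> mp V (up s (-e)) (up s (-h)) x = mp V (up s (-d)) (up s (-h)) y"

lemma meet_at_mono:
  assumes "meet_at s e x d y h" "0 < h'" "h' \<le> h" "h \<le> e" "h \<le> d"
    and "x \<in> carrier (sp V (up s (-e)))" "y \<in> carrier (sp V (up s (-d)))"
  shows "meet_at s e x d y h'"
proof -
  have "mp V (up s (-e)) (up s (-h')) x = mp V (up s (-h)) (up s (-h')) (mp V (up s (-e)) (up s (-h)) x)"
    using assms by simp
  also have "\<dots> = mp V (up s (-h)) (up s (-h')) (mp V (up s (-d)) (up s (-h)) y)"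
    using assms(1) unfolding meet_at_def by simp
  also have "\<dots> = mp V (up s (-d)) (up s (-h')) y"
    using assms by simp
  finally show ?thesis
    unfolding meet_at_def .
qed

lemma mem_lcls:
  "(d, y) \<in> lcls V s e x \<longleftrightarrow> 0 < d \<and> y \<in> carrier (sp V (up s (-d))) \<and>
    (\<exists>h. 0 < h \<and> h \<le> e \<and> h \<le> d \<and> meet_at s e x d y h)"
  unfolding lcls_def meet_at_def by simp

lemma lcls_subset:
  assumes x: "x \<in> carrier (sp V (up s (-e)))" and y: "y \<in> carrier (sp V (up s (-d)))"
    and h: "0 < h" "h \<le> e" "h \<le> d" "meet_at s e x d y h"
  shows "lcls V s e x \<subseteq> lcls V s d y"
proof clarify
  fix d' y' assume "(d', y') \<in> lcls V s e x"
  then obtain k where k: "0 < d'" "y' \<in> carrier (sp V (up s (-d')))" "0 < k" "k \<le> e" "k \<le> d'"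
    "meet_at s e x d' y' k"
    unfolding mem_lcls by blast
  define m where "m = min h k"
  have m: "0 < m" "m \<le> h" "m \<le> k"
    using h k by (auto simp: m_def)
  have "meet_at s e x d y m"
    using meet_at_mono[OF h(4) m(1,2)] h x y by simp
  moreover have "meet_at s e x d' y' m"
    using meet_at_mono[OF k(6) m(1,3)] k x by simp
  ultimately have "meet_at s d y d' y' m"
    unfolding meet_at_def by simp
  then show "(d', y') \<in> lcls V s d y"
    unfolding mem_lcls using k h m by auto
qed

lemma lcls_eq_iff:
  assumes "0 < e" "x \<in> carrier (sp V (up s (-e)))" "0 < d" "y \<in> carrier (sp V (up s (-d)))"
  shows "lcls V s e x = lcls V s d y \<longleftrightarrow> (\<exists>h. 0 < h \<and> h \<le> e \<and> h \<le> d \<and> meet_at s e x d y h)"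
proof
  assume "lcls V s e x = lcls V s d y"
  moreover have "(d, y) \<in> lcls V s d y"
    using assms(3,4) unfolding mem_lcls meet_at_def by auto
  ultimately have "(d, y) \<in> lcls V s e x"
    by simp
  then show "\<exists>h. 0 < h \<and> h \<le> e \<and> h \<le> d \<and> meet_at s e x d y h"
    unfolding mem_lcls by blast
next
  assume "\<exists>h. 0 < h \<and> h \<le> e \<and> h \<le> d \<and> meet_at s e x d y h"
  then obtain h where h: "0 < h" "h \<le> e" "h \<le> d" "meet_at s e x d y h"
    by blast
  have "meet_at s d y e x h"
    using h(4) unfolding meet_at_def by simp
  then have "lcls V s d y \<subseteq> lcls V s e x"
    using lcls_subset[OF assms(4,2) h(1,3,2)] by blast
  moreover have "lcls V s e x \<subseteq> lcls V s d y"
    by (rule lcls_subset[OF assms(2,4) h])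
  ultimately show "lcls V s e x = lcls V s d y"
    by (rule subset_antisym[rotated])
qed

lemma lcls_push:
  assumes "0 < d" "d \<le> e" "x \<in> carrier (sp V (up s (-e)))"
  shows "lcls V s e x = lcls V s d (mp V (up s (-e)) (up s (-d)) x)"
  using assms by (subst lcls_eq_iff) (auto simp: meet_at_def intro!: exI[of _ d])

lemma lcls_in_lcar: "0 < e \<Longrightarrow> x \<in> carrier (sp V (up s (-e))) \<Longrightarrow> lcls V s e x \<in> lcar V s"
  unfolding lcar_def by auto

lemma lcarE:
  assumes "a \<in> lcar V s"
  obtains e x where "0 < e" "x \<in> carrier (sp V (up s (-e)))" "a = lcls V s e x"
  using assms unfolding lcar_def by auto

lemma lcar_common_index:
  assumes "a \<in> lcar V s" "b \<in> lcar V s" "c \<in> lcar V s"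
  obtains d x y z where "0 < d" "a = lcls V s d x" "b = lcls V s d y" "c = lcls V s d z"
    "x \<in> carrier (sp V (up s (-d)))" "y \<in> carrier (sp V (up s (-d)))" "z \<in> carrier (sp V (up s (-d)))"
proof -
  obtain e1 x where x: "0 < e1" "x \<in> carrier (sp V (up s (-e1)))" "a = lcls V s e1 x"
    using assms(1) by (rule lcarE)
  obtain e2 y where y: "0 < e2" "y \<in> carrier (sp V (up s (-e2)))" "b = lcls V s e2 y"
    using assms(2) by (rule lcarE)
  obtain e3 z where z: "0 < e3" "z \<in> carrier (sp V (up s (-e3)))" "c = lcls V s e3 z"
    using assms(3) by (rule lcarE)
  define d where "d = min e1 (min e2 e3)"
  have d: "0 < d" "d \<le> e1" "d \<le> e2" "d \<le> e3"
    using x y z by (auto simp: d_def)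
  show ?thesis
    by (rule that[OF d(1), of "mp V (up s (-e1)) (up s (-d)) x" "mp V (up s (-e2)) (up s (-d)) y"
          "mp V (up s (-e3)) (up s (-d)) z"])
      (use x y z d lcls_push[OF d(1,2) x(2)] lcls_push[OF d(1,3) y(2)] lcls_push[OF d(1,4) z(2)]
        in simp_all)
qed

lemma lcls_invariant:
  assumes push: "\<And>e h x. 0 < h \<Longrightarrow> h \<le> e \<Longrightarrow> x \<in> carrier (sp V (up s (-e))) \<Longrightarrow>
      F h (mp V (up s (-e)) (up s (-h)) x) = F e x"
    and x: "0 < e" "x \<in> carrier (sp V (up s (-e)))" and y: "0 < d" "y \<in> carrier (sp V (up s (-d)))"
    and eq: "lcls V s e x = lcls V s d y"
  shows "F e x = F d y"
proof -
  obtain h where h: "0 < h" "h \<le> e" "h \<le> d" "meet_at s e x d y h"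
    using eq lcls_eq_iff[OF x y] by blast
  have "F e x = F h (mp V (up s (-e)) (up s (-h)) x)"
    by (rule push[symmetric]) (use h x in simp_all)
  also have "\<dots> = F h (mp V (up s (-d)) (up s (-h)) y)"
    using h(4) unfolding meet_at_def by simp
  also have "\<dots> = F d y"
    by (rule push) (use h y in simp_all)
  finally show ?thesis .
qed

text \<open>Stated with \<open>dn\<close>, literally as the definitions of \<open>lsmult\<close>, \<open>lenv\<close> and \<open>lcounit\<close>
  choose their representatives.\<close>

lemma some_lcls_eq:
  assumes push: "\<And>e h x. 0 < h \<Longrightarrow> h \<le> e \<Longrightarrow> x \<in> carrier (sp V (up s (-e))) \<Longrightarrow>
      F h (mp V (up s (-e)) (up s (-h)) x) = F e x"
    and x: "0 < e" "x \<in> carrier (sp V (up s (-e)))"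
  shows "(SOME c. \<exists>e' x'. 0 < e' \<and> x' \<in> carrier (sp V (dn s e')) \<and>
      lcls V s e x = lcls V s e' x' \<and> c = F e' x') = F e x"
proof (rule some_equality)
  fix c assume "\<exists>e' x'. 0 < e' \<and> x' \<in> carrier (sp V (dn s e')) \<and>
      lcls V s e x = lcls V s e' x' \<and> c = F e' x'"
  then obtain e' x' where "0 < e'" "x' \<in> carrier (sp V (up s (-e')))" "lcls V s e x = lcls V s e' x'"
    "c = F e' x'"
    by auto
  then show "c = F e x"
    using lcls_invariant[OF push x] by metis
qed (use x in auto)

lemma lsmult_lcls:
  assumes "0 < e" "x \<in> carrier (sp V (up s (-e)))" "a \<in> carrier K"
  shows "lsmult V s a (lcls V s e x) = lcls V s e (a \<odot>\<^bsub>sp V (up s (-e))\<^esub> x)"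
proof -
  have "lsmult V s a (lcls V s e x) = lcls V s e (a \<odot>\<^bsub>sp V (dn s e)\<^esub> x)"
    unfolding lsmult_def
  proof (rule some_lcls_eq)
    fix e h x assume h: "0 < h" "h \<le> e" and x: "x \<in> carrier (sp V (up s (-e)))"
    then have "a \<odot>\<^bsub>sp V (up s (-h))\<^esub> mp V (up s (-e)) (up s (-h)) x =
        mp V (up s (-e)) (up s (-h)) (a \<odot>\<^bsub>sp V (up s (-e))\<^esub> x)"
      using assms(3) by (simp add: mp_smult)
    then show "lcls V s h (a \<odot>\<^bsub>sp V (dn s h)\<^esub> mp V (up s (-e)) (up s (-h)) x) =
        lcls V s e (a \<odot>\<^bsub>sp V (dn s e)\<^esub> x)"
      using lcls_push[of h e "a \<odot>\<^bsub>sp V (up s (-e))\<^esub> x" s] h x assms(3) by simp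
  qed (fact assms)+
  then show ?thesis
    by simp
qed

lemma lmp_lcls:
  assumes st: "s \<le> t" and "0 < e" "x \<in> carrier (sp V (up s (-e)))"
  shows "mp (lenv V) s t (lcls V s e x) = lcls V t e (mp V (up s (-e)) (up t (-e)) x)"
proof -
  have "mp (lenv V) s t (lcls V s e x) = lcls V t e (mp V (dn s e) (dn t e) x)"
    unfolding lenv_def pmod.simps
  proof (rule some_lcls_eq)
    fix e h x assume h: "0 < h" "h \<le> e" and x: "x \<in> carrier (sp V (up s (-e)))"
    then have "mp V (up s (-h)) (up t (-h)) (mp V (up s (-e)) (up s (-h)) x) =
        mp V (up t (-e)) (up t (-h)) (mp V (up s (-e)) (up t (-e)) x)"
      using st by simp
    then show "lcls V t h (mp V (dn s h) (dn t h) (mp V (up s (-e)) (up s (-h)) x)) =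
        lcls V t e (mp V (dn s e) (dn t e) x)"
      using lcls_push[of h e "mp V (up s (-e)) (up t (-e)) x" t] h x st by simp
  qed (fact assms)+
  then show ?thesis
    by simp
qed

lemma lcounit_lcls:
  assumes "0 < e" "x \<in> carrier (sp V (up s (-e)))"
  shows "lcounit V s (lcls V s e x) = mp V (up s (-e)) s x"
proof -
  have "lcounit V s (lcls V s e x) = mp V (dn s e) s x"
    unfolding lcounit_def
  proof (rule some_lcls_eq)
    fix e h x assume "0 < h" "h \<le> e" "x \<in> carrier (sp V (up s (-e)))"
    then show "mp V (dn s h) s (mp V (up s (-e)) (up s (-h)) x) = mp V (dn s e) s x"
      by simp
  qed (fact assms)+
  then show ?thesis
    by simp
qed

lemma lcls_add_push:
  assumes m: "0 < m" "m \<le> e" "m \<le> d"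
    and x: "x \<in> carrier (sp V (up s (-e)))" and y: "y \<in> carrier (sp V (up s (-d)))"
  shows "lcls V s (min e d) (mp V (up s (-e)) (up s (- min e d)) x \<oplus>\<^bsub>sp V (up s (- min e d))\<^esub>
        mp V (up s (-d)) (up s (- min e d)) y) =
      lcls V s m (mp V (up s (-e)) (up s (-m)) x \<oplus>\<^bsub>sp V (up s (-m))\<^esub> mp V (up s (-d)) (up s (-m)) y)"
proof -
  let ?n = "min e d"
  have "m \<le> ?n"
    using m by simp
  then show ?thesis
    using lcls_push[of m ?n _ s] m x y by (simp add: mp_add)
qed

lemma ladd_lcls:
  assumes e: "0 < e" and x: "x \<in> carrier (sp V (up s (-e)))" and y: "y \<in> carrier (sp V (up s (-e)))"
  shows "ladd V s (lcls V s e x) (lcls V s e y) = lcls V s e (x \<oplus>\<^bsub>sp V (up s (-e))\<^esub> y)"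
proof -
  define G where "G e x d y = lcls V s (min e d) (mp V (dn s e) (dn s (min e d)) x \<oplus>\<^bsub>sp V (dn s (min e d))\<^esub>
      mp V (dn s d) (dn s (min e d)) y)" for e x d y
  have push_left: "G h (mp V (up s (-e)) (up s (-h)) x) d y = G e x d y"
    if "0 < h" "h \<le> e" "x \<in> carrier (sp V (up s (-e)))" "0 < d" "y \<in> carrier (sp V (up s (-d)))"
    for e h x d y
    unfolding G_def using that lcls_add_push[where m = "min h d" and e = e and d = d and x = x and y = y]
    by simp
  have push_right: "G e x h (mp V (up s (-d)) (up s (-h)) y) = G e x d y"
    if "0 < h" "h \<le> d" "y \<in> carrier (sp V (up s (-d)))" "0 < e" "x \<in> carrier (sp V (up s (-e)))"
    for e h x d y
    unfolding G_def using that lcls_add_push[where m = "min e h" and e = e and d = d and x = x and y = y]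
    by simp
  have "ladd V s (lcls V s e x) (lcls V s e y) = G e x e y"
    unfolding ladd_def G_def[symmetric]
  proof (rule some_equality)
    fix c assume "\<exists>e' x' d y'. 0 < e' \<and> 0 < d \<and> x' \<in> carrier (sp V (dn s e')) \<and>
      y' \<in> carrier (sp V (dn s d)) \<and> lcls V s e x = lcls V s e' x' \<and> lcls V s e y = lcls V s d y' \<and>
      c = G e' x' d y'"
    then obtain e' x' d y' where x': "0 < e'" "x' \<in> carrier (sp V (up s (-e')))"
      and y': "0 < d" "y' \<in> carrier (sp V (up s (-d)))"
      and eqx: "lcls V s e x = lcls V s e' x'" and eqy: "lcls V s e y = lcls V s d y'"
      and c: "c = G e' x' d y'"
      by auto
    have "G e x e y = G e x d y'"
      by (rule lcls_invariant[where F = "\<lambda>d y. G e x d y", OF _ e y y' eqy])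
        (simp add: push_right e x)
    also have "\<dots> = G e' x' d y'"
      by (rule lcls_invariant[where F = "\<lambda>e x. G e x d y'", OF _ e x x' eqx])
        (simp add: push_left y')
    finally show "c = G e x e y"
      by (simp add: c)
  qed (use e x y in auto)
  then show ?thesis
    using x y by (simp add: G_def)
qed

lemma lzero_eq_lcls: "0 < e \<Longrightarrow> lzero V s = lcls V s e \<zero>\<^bsub>sp V (up s (-e))\<^esub>"
  unfolding lzero_def dn_eq_up
  by (subst lcls_eq_iff) (auto simp: meet_at_def intro!: exI[of _ "min 1 e"])

lemma lenv_sp [simp]:
  "carrier (sp (lenv V) s) = lcar V s"
  "zero (sp (lenv V) s) = lzero V s"
  "add (sp (lenv V) s) = ladd V s"
  "smult (sp (lenv V) s) = lsmult V s"
  by (simp_all add: lenv_def)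

lemma lin_lcls: "0 < d \<Longrightarrow> lin K (sp V (up s (-d))) (sp (lenv V) s) (lcls V s d)"
  unfolding lin_def by (simp add: lcls_in_lcar ladd_lcls lsmult_lcls)

lemma lenv_module: "module K (sp (lenv V) s)"
proof (rule module_from_covering_lins[OF cring])
  show "\<zero>\<^bsub>sp (lenv V) s\<^esub> \<in> carrier (sp (lenv V) s)"
    using lzero_eq_lcls[of 1 s] by (simp add: lcls_in_lcar)
next
  fix a b c assume "a \<in> carrier (sp (lenv V) s)" "b \<in> carrier (sp (lenv V) s)" "c \<in> carrier (sp (lenv V) s)"
  then obtain d x y z where d: "0 < d" and "a = lcls V s d x" "b = lcls V s d y" "c = lcls V s d z"
    "x \<in> carrier (sp V (up s (-d)))" "y \<in> carrier (sp V (up s (-d)))" "z \<in> carrier (sp V (up s (-d)))"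
    using lcar_common_index by (metis lenv_sp(1))
  then show "\<exists>(M :: ('k, 'c) module) f x y z. module K M \<and> lin K M (sp (lenv V) s) f \<and> f \<zero>\<^bsub>M\<^esub> = \<zero>\<^bsub>sp (lenv V) s\<^esub> \<and>
      x \<in> carrier M \<and> y \<in> carrier M \<and> z \<in> carrier M \<and> a = f x \<and> b = f y \<and> c = f z"
    using lin_lcls[OF d] lzero_eq_lcls[OF d] by (intro exI[of _ "sp V (up s (-d))"] exI[of _ "lcls V s d"]) auto
qed

lemma lin_lenvI:
  assumes lin: "\<And>d. 0 < d \<Longrightarrow> lin K (sp V (up s (-d))) N (f d)"
    and f: "\<And>d x. 0 < d \<Longrightarrow> x \<in> carrier (sp V (up s (-d))) \<Longrightarrow> g (lcls V s d x) = f d x"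
  shows "lin K (sp (lenv V) s) N g"
  unfolding lin_def
proof (intro conjI ballI Pi_I)
  fix a assume "a \<in> carrier (sp (lenv V) s)"
  then obtain d x where "0 < d" "x \<in> carrier (sp V (up s (-d)))" "a = lcls V s d x"
    by (auto elim: lcarE)
  then show "g a \<in> carrier N"
    using f linD(1)[OF lin] by simp
next
  fix a b assume "a \<in> carrier (sp (lenv V) s)" "b \<in> carrier (sp (lenv V) s)"
  then obtain d x y z where "0 < d" "a = lcls V s d x" "b = lcls V s d y"
    "x \<in> carrier (sp V (up s (-d)))" "y \<in> carrier (sp V (up s (-d)))"
    using lcar_common_index by (metis lenv_sp(1))
  then show "g (a \<oplus>\<^bsub>sp (lenv V) s\<^esub> b) = g a \<oplus>\<^bsub>N\<^esub> g b"
    using f linD(2)[OF lin] by (simp add: ladd_lcls)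
next
  fix k a assume "k \<in> carrier K" "a \<in> carrier (sp (lenv V) s)"
  moreover obtain d x where "0 < d" "x \<in> carrier (sp V (up s (-d)))" "a = lcls V s d x"
    using \<open>a \<in> carrier (sp (lenv V) s)\<close> by (auto elim: lcarE)
  ultimately show "g (k \<odot>\<^bsub>sp (lenv V) s\<^esub> a) = k \<odot>\<^bsub>N\<^esub> g a"
    using f linD(3)[OF lin] by (simp add: lsmult_lcls)
qed

lemma lenv_pers: "pers K (lenv V)"
  unfolding pers_def
proof (intro conjI allI impI)
  show "module K (sp (lenv V) s)" for s
    by (rule lenv_module)
next
  fix s t :: "real^'n" assume "s \<le> t"
  show "lin K (sp (lenv V) s) (sp (lenv V) t) (mp (lenv V) s t)"
  proof (rule lin_lenvI)
    show "lin K (sp V (up s (-d))) (sp (lenv V) t) (\<lambda>x. lcls V t d (mp V (up s (-d)) (up t (-d)) x))"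
      if "0 < d" for d
      using lin_comp[OF lin_mp lin_lcls] \<open>s \<le> t\<close> that by simp
  qed (use \<open>s \<le> t\<close> lmp_lcls in simp)
next
  fix s a assume "a \<in> carrier (sp (lenv V) s)"
  then show "mp (lenv V) s s a = a"
    by (auto simp: lmp_lcls elim: lcarE)
next
  fix s t u a assume "s \<le> t" "t \<le> u" "a \<in> carrier (sp (lenv V) s)"
  then show "mp (lenv V) s u a = mp (lenv V) t u (mp (lenv V) s t a)"
    by (auto simp: lmp_lcls elim!: lcarE dest: order_trans)
qed

lemma lcounit_hom: "pers_hom K (lenv V) V (lcounit V)"
  unfolding pers_hom_def
proof (intro conjI allI impI)
  show "lin K (sp (lenv V) s) (sp V s) (lcounit V s)" for s
    by (rule lin_lenvI[OF lin_mp]) (simp_all add: lcounit_lcls)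
next
  fix s t a assume "s \<le> t" "a \<in> carrier (sp (lenv V) s)"
  then show "lcounit V t (mp (lenv V) s t a) = mp V s t (lcounit V s a)"
    by (auto simp: lmp_lcls lcounit_lcls elim!: lcarE)
qed

lemma lcls_lenv_lcls_eqI:
  assumes e: "0 < e" and d: "0 < d"
    and x: "x \<in> carrier (sp V (up (up s (-e)) (-d)))" and y: "y \<in> carrier (sp V (up (up s (-e)) (-d)))"
    and k: "0 < k" "k \<le> d"
    and meet: "mp V (up (up s (-e)) (-d)) (up s (-k)) x = mp V (up (up s (-e)) (-d)) (up s (-k)) y"
  shows "lcls (lenv V) s e (lcls V (up s (-e)) d x) = lcls (lenv V) s e (lcls V (up s (-e)) d y)"
proof -
  interpret L: persistence_module K "lenv V"
    by (rule persistence_module.intro[OF cring lenv_pers])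
  define h where "h = min k e / 2"
  have h: "0 < h" "h \<le> e" "h + h \<le> k" "h \<le> d"
    using k e by (auto simp: h_def)
  have "mp V (up (up s (-e)) (-d)) (up s (-h - h)) x =
      mp V (up s (-k)) (up s (-h - h)) (mp V (up (up s (-e)) (-d)) (up s (-k)) x)"
    using x h k e by simp
  also have "\<dots> = mp V (up s (-k)) (up s (-h - h)) (mp V (up (up s (-e)) (-d)) (up s (-k)) y)"
    by (simp only: meet)
  also have "\<dots> = mp V (up (up s (-e)) (-d)) (up s (-h - h)) y"
    using y h k e by simp
  finally have "mp V (up (up s (-e)) (-d)) (up s (-h - h)) x = mp V (up (up s (-e)) (-d)) (up s (-h - h)) y" .
  then have "mp (lenv V) (up s (-e)) (up s (-h)) (lcls V (up s (-e)) d x) =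
      mp (lenv V) (up s (-e)) (up s (-h)) (lcls V (up s (-e)) d y)"
    using x y h d by (simp add: lmp_lcls, subst lcls_eq_iff) (auto simp: meet_at_def intro!: exI[of _ h])
  then show ?thesis
    using x y h d e
    by (subst L.lcls_eq_iff) (auto simp: L.meet_at_def lcls_in_lcar intro!: exI[of _ h])
qed

lemma inj_on_lcounit_lenv: "inj_on (lcounit (lenv V) s) (lcar (lenv V) s)"
proof (rule inj_onI)
  interpret L: persistence_module K "lenv V"
    by (rule persistence_module.intro[OF cring lenv_pers])
  fix A B assume A: "A \<in> lcar (lenv V) s" and B: "B \<in> lcar (lenv V) s"
    and eq: "lcounit (lenv V) s A = lcounit (lenv V) s B"
  obtain e a b where e: "0 < e" and AB: "A = lcls (lenv V) s e a" "B = lcls (lenv V) s e b"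
    and ab: "a \<in> lcar V (up s (-e))" "b \<in> lcar V (up s (-e))"
    using L.lcar_common_index[OF A B B] by (metis lenv_sp(1))
  obtain d x y where d: "0 < d" and xy: "a = lcls V (up s (-e)) d x" "b = lcls V (up s (-e)) d y"
    and x: "x \<in> carrier (sp V (up (up s (-e)) (-d)))" and y: "y \<in> carrier (sp V (up (up s (-e)) (-d)))"
    using lcar_common_index[OF ab ab(2)] by metis
  have "lcls V s d (mp V (up (up s (-e)) (-d)) (up s (-d)) x) =
      lcls V s d (mp V (up (up s (-e)) (-d)) (up s (-d)) y)"
    using eq e d x y ab by (simp add: AB xy L.lcounit_lcls lmp_lcls)
  then obtain k where k: "0 < k" "k \<le> d"
    and "mp V (up s (-d)) (up s (-k)) (mp V (up (up s (-e)) (-d)) (up s (-d)) x) =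
      mp V (up s (-d)) (up s (-k)) (mp V (up (up s (-e)) (-d)) (up s (-d)) y)"
    using d x y e by (subst (asm) lcls_eq_iff) (auto simp: meet_at_def)
  then have "mp V (up (up s (-e)) (-d)) (up s (-k)) x = mp V (up (up s (-e)) (-d)) (up s (-k)) y"
    using x y e by simp
  then show "A = B"
    unfolding AB xy by (rule lcls_lenv_lcls_eqI[OF e d x y k])
qed

lemma lcounit_lenv_image: "lcounit (lenv V) s ` lcar (lenv V) s = lcar V s"
proof
  interpret L: persistence_module K "lenv V"
    by (rule persistence_module.intro[OF cring lenv_pers])
  show "lcounit (lenv V) s ` lcar (lenv V) s \<subseteq> lcar V s"
  proof clarify
    fix A assume "A \<in> lcar (lenv V) s"
    then obtain e a where "0 < e" "a \<in> lcar V (up s (-e))" "A = lcls (lenv V) s e a"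
      by (auto elim: L.lcarE)
    then show "lcounit (lenv V) s A \<in> lcar V s"
      using L.mp_closed[of "up s (-e)" s a] by (simp add: L.lcounit_lcls)
  qed
  show "lcar V s \<subseteq> lcounit (lenv V) s ` lcar (lenv V) s"
  proof
    fix a assume "a \<in> lcar V s"
    then obtain d x where d: "0 < d" and x: "x \<in> carrier (sp V (up s (-d)))" and a: "a = lcls V s d x"
      by (rule lcarE)
    define h where "h = d / 2"
    have h: "0 < h" "h < d" and hh: "up (up s (-h)) (-h) = up s (-d)"
      using d by (simp_all add: h_def)
    have b: "lcls V (up s (-h)) h x \<in> lcar V (up s (-h))"
      using h x hh by (intro lcls_in_lcar) simp_all
    have "lcounit (lenv V) s (lcls (lenv V) s h (lcls V (up s (-h)) h x)) = lcls V s h (mp V (up s (-d)) (up s (-h)) x)"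
      using h b x hh by (simp add: L.lcounit_lcls lmp_lcls del: up_up)
    also have "\<dots> = a"
      unfolding a using lcls_push[of h d x s] h x by simp
    finally show "a \<in> lcounit (lenv V) s ` lcar (lenv V) s"
      using h b by (auto intro!: image_eqI L.lcls_in_lcar)
  qed
qed

lemma lenv_lsc: "lsc K (lenv V)"
  unfolding lsc_def bij_betw_def using lenv_pers inj_on_lcounit_lenv lcounit_lenv_image by simp

lemma lunit_obs_hom: "obs_hom K V (lenv V) (lunit V)"
  unfolding obs_hom_def
proof (intro conjI allI impI)
  fix s and e :: real assume "0 < e"
  then show "lin K (sp V s) (sp (lenv V) (up s e)) (lunit V s e)"
    unfolding lunit_def using lin_lcls[of e "up s e"] by simp
next
  fix s and e e' e'' :: real and x
  assume e: "0 < e" "0 \<le> e''" "e'' < e'" "e' \<le> e" and x: "x \<in> carrier (sp V s)"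
  define y where "y = mp V s (up s e'') x"
  have y: "y \<in> carrier (sp V (up s e''))"
    using e x by (simp add: y_def)
  have "mp (lenv V) (up s e') (up s e) (lcls V (up s e') (e' - e'') y) =
      lcls V (up s e) (e' - e'') (mp V (up s e'') (up s (e - (e' - e''))) y)"
    using lmp_lcls[of "up s e'" "up s e" "e' - e''" y] e y by (simp add: algebra_simps)
  also have "\<dots> = lcls V (up s e) e x"
    using e y by (subst lcls_eq_iff) (auto simp: meet_at_def y_def algebra_simps x intro!: exI[of _ "e' - e''"])
  finally show "lunit V s e x = mp (lenv V) (up s e') (up s e) (lunit V (up s e'') (e' - e'') (mp V s (up s e'') x))"
    by (simp add: lunit_def y_def)
qed

lemma lunit_obs_iso: "obs_iso K V (lenv V) (lunit V)"
  unfolding obs_iso_def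
proof (intro conjI exI[of _ "obs_of V (lcounit V)"])
  show "obs_hom K V (lenv V) (lunit V)"
    by (rule lunit_obs_hom)
  show "obs_hom K (lenv V) V (obs_of V (lcounit V))"
    by (rule obs_hom_obs_of[OF lcounit_hom])
  show "obs_eq V (obs_comp (obs_of V (lcounit V)) (lunit V)) (obs_id V)"
    unfolding obs_eq_def obs_comp_def obs_id_def obs_of_def
    by (simp add: lunit_def lcounit_lcls)
  show "obs_eq (lenv V) (obs_comp (lunit V) (obs_of V (lcounit V))) (obs_id (lenv V))"
    unfolding obs_eq_def obs_comp_def obs_id_def obs_of_def
  proof (intro allI impI)
    fix s e a assume e: "0 < (e::real)" and "a \<in> carrier (sp (lenv V) s)"
    then obtain d x where d: "0 < d" and x: "x \<in> carrier (sp V (up s (-d)))" and a: "a = lcls V s d x"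
      by (auto elim: lcarE)
    define h where "h = min d (e/2)"
    have h: "0 < h" "h \<le> d" "h \<le> e/2"
      using d e by (auto simp: h_def)
    show "lunit V (up s (e / 2)) (e / 2) (mp V s (up s (e / 2)) (lcounit V s a)) = mp (lenv V) s (up s e) a"
      using e d x h unfolding a
      by (simp add: lunit_def lcounit_lcls lmp_lcls, subst lcls_eq_iff) (auto simp: meet_at_def intro!: exI[of _ h])
  qed
qed

lemma lcounit_pers_iso:
  assumes "lsc K V"
  shows "pers_iso K (lenv V) V (lcounit V)"
proof -
  interpret L: persistence_module K "lenv V"
    by (rule persistence_module.intro[OF cring lenv_pers])
  show ?thesis
    by (rule L.pers_iso_of_pointwise_bij[OF lcounit_hom]) (use assms in \<open>simp add: lsc_def\<close>)
qed

subsection \<open>The upper envelope\<close>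

lemma ucarI:
  assumes "\<And>e. 0 < e \<Longrightarrow> f e \<in> carrier (sp V (up s e))"
    and "\<And>d e. 0 < d \<Longrightarrow> d \<le> e \<Longrightarrow> mp V (up s d) (up s e) (f d) = f e"
    and "\<And>e. \<not> 0 < e \<Longrightarrow> f e = undefined"
  shows "f \<in> ucar V s"
  using assms unfolding ucar_def by blast

lemma ucarD:
  assumes "f \<in> ucar V s"
  shows "0 < e \<Longrightarrow> f e \<in> carrier (sp V (up s e))"
    and "0 < d \<Longrightarrow> d \<le> e \<Longrightarrow> mp V (up s d) (up s e) (f d) = f e"
    and "\<not> 0 < e \<Longrightarrow> f e = undefined"
  using assms unfolding ucar_def by blast+

lemma ucar_eqI:
  assumes "f \<in> ucar V s" "g \<in> ucar V s" "\<And>e. 0 < e \<Longrightarrow> f e = g e"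
  shows "f = g"
proof
  fix e show "f e = g e"
    using assms ucarD(3)[OF assms(1)] ucarD(3)[OF assms(2)] by (cases "0 < e") auto
qed

lemma uenv_sp [simp]:
  "carrier (sp (uenv V) s) = ucar V s"
  "zero (sp (uenv V) s) = (\<lambda>e. if 0 < e then \<zero>\<^bsub>sp V (up s e)\<^esub> else undefined)"
  "add (sp (uenv V) s) = (\<lambda>f g e. if 0 < e then f e \<oplus>\<^bsub>sp V (up s e)\<^esub> g e else undefined)"
  "smult (sp (uenv V) s) = (\<lambda>k f e. if 0 < e then k \<odot>\<^bsub>sp V (up s e)\<^esub> f e else undefined)"
  "mp (uenv V) s t = (\<lambda>f e. if 0 < e then mp V (up s e) (up t e) (f e) else undefined)"
  by (simp_all add: uenv_def)

lemma lin_ucounit: "0 < e \<Longrightarrow> lin K (sp (uenv V) s) (sp V (up s e)) (ucounit s e)"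
  unfolding lin_def ucounit_def by (auto dest: ucarD)

lemma uenv_module: "module K (sp (uenv V) s)"
proof (rule module_from_separating_lins[OF cring, where I = "{0<..}" and f = "ucounit s"])
  show "module K (sp V (up s e))" "lin K (sp (uenv V) s) (sp V (up s e)) (ucounit s e)"
    "ucounit s e \<zero>\<^bsub>sp (uenv V) s\<^esub> = \<zero>\<^bsub>sp V (up s e)\<^esub>"
    if "e \<in> {0<..}" for e
    using that lin_ucounit by (simp_all add: ucounit_def)
  show "f = g" if "f \<in> carrier (sp (uenv V) s)" "g \<in> carrier (sp (uenv V) s)"
    "\<And>e. e \<in> {0<..} \<Longrightarrow> ucounit s e f = ucounit s e g" for f g
    using that by (intro ucar_eqI) (simp_all add: ucounit_def)
  show "\<zero>\<^bsub>sp (uenv V) s\<^esub> \<in> carrier (sp (uenv V) s)"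
    by (auto intro!: ucarI)
  show "f \<oplus>\<^bsub>sp (uenv V) s\<^esub> g \<in> carrier (sp (uenv V) s)"
    if "f \<in> carrier (sp (uenv V) s)" "g \<in> carrier (sp (uenv V) s)" for f g
    using ucarD[OF that(1)[simplified]] ucarD[OF that(2)[simplified]] by (auto intro!: ucarI simp: mp_add)
  show "k \<odot>\<^bsub>sp (uenv V) s\<^esub> f \<in> carrier (sp (uenv V) s)"
    if "k \<in> carrier K" "f \<in> carrier (sp (uenv V) s)" for k f
    using that(1) ucarD[OF that(2)[simplified]] by (auto intro!: ucarI simp: mp_smult)
qed

lemma mp_uenv_closed:
  assumes st: "s \<le> t" and f: "f \<in> ucar V s"
  shows "mp (uenv V) s t f \<in> ucar V t"
proof (rule ucarI)
  fix d e :: real assume de: "0 < d" "d \<le> e"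
  have "mp V (up t d) (up t e) (mp V (up s d) (up t d) (f d)) = mp V (up s e) (up t e) (mp V (up s d) (up s e) (f d))"
    using de st ucarD(1)[OF f] by simp
  then show "mp V (up t d) (up t e) (mp (uenv V) s t f d) = mp (uenv V) s t f e"
    using de ucarD(2)[OF f de] by simp
qed (use st ucarD(1)[OF f] in simp_all)

lemma uenv_pers: "pers K (uenv V)"
  unfolding pers_def
proof (intro conjI allI impI)
  show "module K (sp (uenv V) s)" for s
    by (rule uenv_module)
next
  fix s t :: "real^'n" assume st: "s \<le> t"
  show "lin K (sp (uenv V) s) (sp (uenv V) t) (mp (uenv V) s t)"
    unfolding lin_def
  proof (intro conjI ballI Pi_I)
    show "mp (uenv V) s t f \<in> carrier (sp (uenv V) t)" if "f \<in> carrier (sp (uenv V) s)" for f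
      using mp_uenv_closed[OF st] that by simp
    show "mp (uenv V) s t (f \<oplus>\<^bsub>sp (uenv V) s\<^esub> g) = mp (uenv V) s t f \<oplus>\<^bsub>sp (uenv V) t\<^esub> mp (uenv V) s t g"
      if "f \<in> carrier (sp (uenv V) s)" "g \<in> carrier (sp (uenv V) s)" for f g
      using ucarD(1)[OF that(1)[simplified]] ucarD(1)[OF that(2)[simplified]] st
      by (auto intro!: ext simp: mp_add)
    show "mp (uenv V) s t (k \<odot>\<^bsub>sp (uenv V) s\<^esub> f) = k \<odot>\<^bsub>sp (uenv V) t\<^esub> mp (uenv V) s t f"
      if "k \<in> carrier K" "f \<in> carrier (sp (uenv V) s)" for k f
      using ucarD(1)[OF that(2)[simplified]] that(1) st by (auto intro!: ext simp: mp_smult)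
  qed
next
  fix s f assume "f \<in> carrier (sp (uenv V) s)"
  then have f: "f \<in> ucar V s"
    by simp
  show "mp (uenv V) s s f = f"
    using ucarD[OF f] by (auto intro!: ext)
next
  fix s t u f assume "s \<le> t" "t \<le> u" "f \<in> carrier (sp (uenv V) s)"
  then show "mp (uenv V) s u f = mp (uenv V) t u (mp (uenv V) s t f)"
    using ucarD(1) by (auto intro!: ext dest: order_trans)
qed

lemma ucar_uenv_sum_eq:
  assumes G: "G \<in> ucar (uenv V) s"
    and pos: "0 < e" "0 < d" "0 < e'" "0 < d'" and sum: "e + d = e' + d'" and le: "e \<le> e'"
  shows "G e d = G e' d'"
proof -
  interpret U: persistence_module K "uenv V"
    by (rule persistence_module.intro[OF cring uenv_pers])
  have Ge: "G e \<in> ucar V (up s e)"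
    using U.ucarD(1)[OF G pos(1)] by simp
  have "G e' d' = mp V (up s (e + d')) (up s (e' + d')) (G e d')"
    using fun_cong[OF U.ucarD(2)[OF G pos(1) le], of d'] pos by simp
  also have "\<dots> = mp V (up (up s e) d') (up (up s e) d) (G e d')"
    using sum by simp
  also have "\<dots> = G e d"
    using ucarD(2)[OF Ge, of d' d] pos sum le by simp
  finally show ?thesis
    by simp
qed

lemma inj_on_uunit_uenv: "inj_on (uunit (uenv V) s) (ucar V s)"
proof (rule inj_onI)
  fix f g assume f: "f \<in> ucar V s" and g: "g \<in> ucar V s" and eq: "uunit (uenv V) s f = uunit (uenv V) s g"
  show "f = g"
  proof (rule ucar_eqI[OF f g])
    fix x :: real assume x: "0 < x"
    have "uunit (uenv V) s f (x/2) (x/2) = uunit (uenv V) s g (x/2) (x/2)"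
      using eq by simp
    then have "mp V (up s (x/2)) (up s x) (f (x/2)) = mp V (up s (x/2)) (up s x) (g (x/2))"
      using x by (simp add: uunit_def)
    then show "f x = g x"
      using ucarD(2)[OF f, of "x/2" x] ucarD(2)[OF g, of "x/2" x] x by simp
  qed
qed

lemma uunit_uenv_closed:
  assumes "f \<in> ucar V s"
  shows "uunit (uenv V) s f \<in> ucar (uenv V) s"
proof -
  interpret U: persistence_module K "uenv V"
    by (rule persistence_module.intro[OF cring uenv_pers])
  have f: "f \<in> carrier (sp (uenv V) s)"
    using assms by simp
  show ?thesis
    unfolding uunit_def
  proof (rule U.ucarI)
    fix d e :: real assume "0 < d" "d \<le> e"
    then show "mp (uenv V) (up s d) (up s e) (if 0 < d then mp (uenv V) s (up s d) f else undefined) =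
        (if 0 < e then mp (uenv V) s (up s e) f else undefined)"
      using U.mp_comp[OF _ _ f, of "up s d" "up s e"] by (simp del: uenv_sp(5))
  qed (use U.mp_closed[OF _ f] in \<open>simp_all del: uenv_sp(5)\<close>)
qed

lemma uunit_uenv_surj:
  assumes G: "G \<in> ucar (uenv V) s"
  obtains f where "f \<in> ucar V s" "uunit (uenv V) s f = G"
proof -
  interpret U: persistence_module K "uenv V"
    by (rule persistence_module.intro[OF cring uenv_pers])
  have G_in: "G e \<in> ucar V (up s e)" if "0 < e" for e
    using U.ucarD(1)[OF G that] by simp
  define f where "f x = (if 0 < x then G (x/2) (x/2) else undefined)" for x
  have fG: "f (e + d) = G e d" if "0 < e" "0 < d" for e d
    using that ucar_uenv_sum_eq[OF G, of e d "(e+d)/2" "(e+d)/2"] ucar_uenv_sum_eq[OF G, of "(e+d)/2" "(e+d)/2" e d]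
    unfolding f_def by (cases "e \<le> (e + d) / 2") simp_all
  have f: "f \<in> ucar V s"
  proof (rule ucarI)
    fix x :: real assume "0 < x"
    then show "f x \<in> carrier (sp V (up s x))"
      using ucarD(1)[OF G_in[of "x/2"], of "x/2"] by (simp add: f_def)
  next
    fix d e :: real assume de: "0 < d" "d \<le> e"
    then show "mp V (up s d) (up s e) (f d) = f e"
      using fG[of "d/2" "d/2"] fG[of "d/2" "e - d/2"] ucarD(2)[OF G_in[of "d/2"], of "d/2" "e - d/2"] by simp
  qed (simp add: f_def)
  have "uunit (uenv V) s f = G"
  proof (rule U.ucar_eqI[OF uunit_uenv_closed[OF f] G])
    fix e :: real assume e: "0 < e"
    show "uunit (uenv V) s f e = G e"
    proof (rule ucar_eqI)
      fix d :: real assume d: "0 < d"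
      show "uunit (uenv V) s f e d = G e d"
        using e d ucarD(2)[OF f, of d "e + d"] fG[OF e d] by (simp add: uunit_def add.commute)
    qed (use e G_in mp_uenv_closed[OF _ f, of "up s e"] in \<open>simp_all add: uunit_def del: uenv_sp(5)\<close>)
  qed
  with f show ?thesis
    by (rule that)
qed

lemma uenv_usc: "usc K (uenv V)"
  unfolding usc_def bij_betw_def
proof (intro conjI allI uenv_pers)
  fix s
  show "inj_on (uunit (uenv V) s) (carrier (sp (uenv V) s))"
    using inj_on_uunit_uenv by simp
  show "uunit (uenv V) s ` carrier (sp (uenv V) s) = ucar (uenv V) s"
    using uunit_uenv_closed by (auto elim!: uunit_uenv_surj)
qed

lemma uunit_hom: "pers_hom K V (uenv V) (uunit V)"
  unfolding pers_hom_def
proof (intro conjI allI impI)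
  fix s
  show "lin K (sp V s) (sp (uenv V) s) (uunit V s)"
    unfolding lin_def uunit_def
    by (auto intro!: ext ucarI simp: mp_add mp_smult)
next
  fix s t x assume "s \<le> t" "x \<in> carrier (sp V s)"
  then show "uunit V t (mp V s t x) = mp (uenv V) s t (uunit V s x)"
    by (auto intro!: ext simp: uunit_def)
qed

lemma ucounit_obs_hom: "obs_hom K (uenv V) V ucounit"
  unfolding obs_hom_def
proof (intro conjI allI impI)
  show "0 < e \<Longrightarrow> lin K (sp (uenv V) s) (sp V (up s e)) (ucounit s e)" for s e
    by (rule lin_ucounit)
next
  fix s and e e' e'' :: real and f
  assume e: "0 < e" "0 \<le> e''" "e'' < e'" "e' \<le> e" and "f \<in> carrier (sp (uenv V) s)"
  then have f: "f \<in> ucar V s"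
    by simp
  have "mp V (up s e') (up s e) (mp V (up s (e' - e'')) (up s e') (f (e' - e''))) = f e"
    using e ucarD[OF f, of "e' - e''"] ucarD(2)[OF f, of "e' - e''" e] ucarD(2)[OF f, of "e'" e] by simp
  then show "ucounit s e f = mp V (up s e') (up s e) (ucounit (up s e'') (e' - e'') (mp (uenv V) s (up s e'') f))"
    using e by (simp add: ucounit_def)
qed

lemma ucounit_obs_iso: "obs_iso K (uenv V) V ucounit"
  unfolding obs_iso_def
proof (intro conjI exI[of _ "obs_of (uenv V) (uunit V)"])
  show "obs_hom K (uenv V) V ucounit"
    by (rule ucounit_obs_hom)
  show "obs_hom K V (uenv V) (obs_of (uenv V) (uunit V))"
    by (rule persistence_module.obs_hom_obs_of[OF persistence_module.intro[OF cring uenv_pers] uunit_hom])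
  show "obs_eq (uenv V) (obs_comp (obs_of (uenv V) (uunit V)) ucounit) (obs_id (uenv V))"
    unfolding obs_eq_def obs_comp_def obs_id_def obs_of_def
  proof (intro allI impI ext)
    fix s e f d assume e: "0 < (e::real)" and "f \<in> carrier (sp (uenv V) s)"
    then have f: "f \<in> ucar V s"
      by simp
    show "mp (uenv V) (up s (e/2)) (up (up s (e/2)) (e/2)) (uunit V (up s (e/2)) (ucounit s (e/2) f)) d =
        mp (uenv V) s (up s e) f d"
      using e ucarD(1)[OF f, of "e/2"] ucarD(2)[OF f, of "e/2" "e/2 + (e/2 + d)"] ucarD(2)[OF f, of d "e + d"]
      by (simp add: uunit_def ucounit_def add.commute)
  qed
  show "obs_eq V (obs_comp ucounit (obs_of (uenv V) (uunit V))) (obs_id V)"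
    unfolding obs_eq_def obs_comp_def obs_id_def obs_of_def
    by (simp add: uunit_def ucounit_def)
qed

lemma uunit_pers_iso:
  assumes "usc K V"
  shows "pers_iso K V (uenv V) (uunit V)"
  by (rule pers_iso_of_pointwise_bij[OF uunit_hom]) (use assms in \<open>simp add: usc_def\<close>)

end

theorem proposition2p14:
  fixes K :: "'k ring"
  assumes "field K"
  shows "(\<forall>V :: ('n::finite, 'k, 'c) pmod. pers K V \<longrightarrow>
            lsc K (lenv V) \<and> obs_iso K V (lenv V) (lunit V)) \<and>
         (\<forall>V :: ('n, 'k, 'c) pmod. lsc K V \<longrightarrow> pers_iso K (lenv V) V (lcounit V)) \<and>
         (\<forall>V :: ('n, 'k, 'c) pmod. pers K V \<longrightarrow>
            usc K (uenv V) \<and> obs_iso K (uenv V) V ucounit) \<and>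
         (\<forall>V :: ('n, 'k, 'c) pmod. usc K V \<longrightarrow> pers_iso K V (uenv V) (uunit V))"
proof -
  have "cring K"
    using assms by (rule field.axioms(1)[THEN domain.axioms(1)])
  then have pm: "persistence_module K V" if "pers K V" for V :: "('n, 'k, 'c) pmod"
    using that by (rule persistence_module.intro)
  show ?thesis
    using persistence_module.lenv_lsc[OF pm] persistence_module.lunit_obs_iso[OF pm]
      persistence_module.uenv_usc[OF pm] persistence_module.ucounit_obs_iso[OF pm]
      persistence_module.lcounit_pers_iso[OF pm] persistence_module.uunit_pers_iso[OF pm]
    by (auto simp: lsc_def usc_def)
qed

end
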